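(* Let $n\ge 1$ and $t\ge 0$ be integers. The number of permutations $\pi\in S_n$ that are $t$-stack-sortable under $s_{1\dot{2}}$ equals $n!$ if $n\le t$, and equals $t!\cdot (t+1)^{\,n-t}$ if $n>t$.
   Context: The $1\dot{2}$-avoiding stack-sorting map $s_{1\dot{2}}$ is defined as follows. Start with the input $\pi$ and an empty stack. Repeat the following step until both the input and the stack are empty: - If input remains, and either the stack is empty or the next input entry is smaller than the entry at the bottom of the stack, push the next input entry onto the top of the stack. - Otherwise, pop the top entry of the stack and append it to the output. The output word is $s_{1\dot{2}}(\pi)$. For an integer $t\ge 0$, a permutation $\pi\in S_n$ is called $t$-stack-sortable (under $s_{1\dot{2}}$) if $s_{1\dot{2}}^{\,t}(\pi)$, the $t$-fold iterate applied to $\pi$, equals the identity $12\cdots n$. *)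

theory Defs
  imports Main "HOL-Combinatorics.Multiset_Permutations"
begin

text \<open>The stack is represented as a list
whose head is the top of the stack and whose last element is the bottom.\<close>

function stack_run :: "nat list \<Rightarrow> nat list \<Rightarrow> nat list" where
  "stack_run inp stk =
     (if inp \<noteq> [] \<and> (stk = [] \<or> hd inp < last stk)
      then stack_run (tl inp) (hd inp # stk)
      else (case stk of
              [] \<Rightarrow> []
            | x # rest \<Rightarrow> x # stack_run inp rest))"
  by pat_completeness auto
termination
  by (relation "measure (\<lambda>(inp, stk). 2 * length inp + length stk)") (auto simp: neq_Nil_conv)

definition s12 :: "nat list \<Rightarrow> nat list" where
  "s12 \<pi> = stack_run \<pi> []"

definition t_stack_sortable :: "nat \<Rightarrow> nat list \<Rightarrow> bool" where
  "t_stack_sortable t \<pi> \<longleftrightarrow> (s12 ^^ t) \<pi> = [1..<length \<pi> + 1]"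

end

theory Submission
  imports Defs
begin

text \<open>One pass of \<open>s12\<close> on \<open>x # rest\<close> outputs the maximal run of entries after \<open>x\<close>
that are smaller than \<open>x\<close>, reversed, then \<open>x\<close>, and then processes the remainder recursively.
Let \<open>a\<close> be the smallest entry of a permutation and \<open>\<sigma>\<close> the permutation of the other entries,
with \<open>a\<close> inserted at position \<open>p\<close>. A pass keeps \<open>a\<close> inserted into the image of \<open>\<sigma>\<close>, at a position
\<open>\<phi>\<^sub>\<sigma>(p)\<close> where \<open>\<phi>\<^sub>\<sigma>\<close> fixes 0 and maps \<open>{1..m}\<close> bijectively onto \<open>{0..<m}\<close>. Hence the
permutation is \<open>t\<close>-stack-sortable iff \<open>\<sigma>\<close> is and \<open>a\<close> is at the front after \<open>t\<close> passes. By
induction on \<open>t\<close>, the good positions are \<open>0\<close> together with the preimages of the good positions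
for \<open>t - 1\<close> passes, except that the last position needs at least \<open>m\<close> passes; so there are
\<open>min (t + 1) (m + 1)\<close> of them, and the count follows by removing minima one at a time.\<close>

declare stack_run.simps[simp del]

text \<open>The bottom of a nonempty stack stays in place until the end, so the stack absorbs the maximal
run of smaller entries and is then emptied completely.\<close>

lemma stack_run_nonempty_stack:
  "stk \<noteq> [] \<Longrightarrow> stack_run inp stk =
     rev (takeWhile (\<lambda>y. y < last stk) inp) @ stk @
     stack_run (dropWhile (\<lambda>y. y < last stk) inp) []"
proof (induction inp stk rule: stack_run.induct)
  case (1 inp stk)
  show ?case
  proof (cases "inp \<noteq> [] \<and> hd inp < last stk")
    case True
    then obtain z zs where inp: "inp = z # zs" by (cases inp) auto
    have "stack_run inp stk = stack_run zs (z # stk)"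
      using True "1.prems" inp by (subst stack_run.simps) auto
    also have "\<dots> = rev (takeWhile (\<lambda>y. y < last stk) zs) @ (z # stk) @
                      stack_run (dropWhile (\<lambda>y. y < last stk) zs) []"
      using "1.IH"(1) True "1.prems" inp by auto
    finally show ?thesis using True inp by simp
  next
    case False
    then obtain x rest where stk: "stk = x # rest" using "1.prems" by (cases stk) auto
    have run: "takeWhile (\<lambda>y. y < last stk) inp = []" "dropWhile (\<lambda>y. y < last stk) inp = inp"
      using False by (cases inp; auto)+
    have pop: "stack_run inp stk = x # stack_run inp rest"
      using False "1.prems" stk by (subst stack_run.simps) auto
    show ?thesis
    proof (cases "rest = []")
      case True
      then show ?thesis using pop run stk by simp
    next
      case False
      then have "stack_run inp rest = rest @ stack_run inp []"
        using "1.IH"(2)[of x rest] \<open>\<not> (inp \<noteq> [] \<and> hd inp < last stk)\<close> "1.prems" stk run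
        by auto
      then show ?thesis using pop run stk by simp
    qed
  qed
qed

function stack_sort :: "'a::linorder list \<Rightarrow> 'a list" where
  "stack_sort [] = []"
| "stack_sort (x # rest) =
     rev (takeWhile (\<lambda>y. y < x) rest) @ x # stack_sort (dropWhile (\<lambda>y. y < x) rest)"
  by pat_completeness auto
termination by (relation "measure length") (auto simp: less_Suc_eq_le length_dropWhile_le)

lemma s12_eq_stack_sort: "s12 = stack_sort"
proof
  fix xs :: "nat list"
  show "s12 xs = stack_sort xs"
  proof (induction xs rule: stack_sort.induct)
    case 1
    then show ?case by (simp add: s12_def stack_run.simps)
  next
    case (2 x rest)
    have "s12 (x # rest) = stack_run rest [x]"
      unfolding s12_def by (subst stack_run.simps) simp
    also have "\<dots> = rev (takeWhile (\<lambda>y. y < x) rest) @ [x] @ s12 (dropWhile (\<lambda>y. y < x) rest)"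
      by (subst stack_run_nonempty_stack) (auto simp: s12_def)
    finally show ?case using 2 by simp
  qed
qed

lemma mset_stack_sort [simp]: "mset (stack_sort xs) = mset xs"
proof (induction xs rule: stack_sort.induct)
  case (2 x rest)
  have "mset rest = mset (takeWhile (\<lambda>y. y < x) rest) + mset (dropWhile (\<lambda>y. y < x) rest)"
    by (metis mset_append takeWhile_dropWhile_id)
  then show ?case using 2 by simp
qed simp

lemma mset_stack_sort_iter [simp]: "mset ((stack_sort ^^ k) xs) = mset xs"
  by (induction k) auto

lemma set_stack_sort_iter [simp]: "set ((stack_sort ^^ k) xs) = set xs"
  by (metis mset_stack_sort_iter set_mset_mset)

lemma length_stack_sort_iter [simp]: "length ((stack_sort ^^ k) xs) = length xs"
  by (metis mset_stack_sort_iter size_mset)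

lemma distinct_stack_sort_iter [simp]: "distinct ((stack_sort ^^ k) xs) \<longleftrightarrow> distinct xs"
  by (metis mset_stack_sort_iter mset_eq_imp_distinct_iff)

lemma set_stack_sort [simp]: "set (stack_sort xs) = set xs"
  using set_stack_sort_iter[of 1] by simp

lemma length_stack_sort [simp]: "length (stack_sort xs) = length xs"
  using length_stack_sort_iter[of 1] by simp

lemma distinct_stack_sort [simp]: "distinct (stack_sort xs) \<longleftrightarrow> distinct xs"
  using distinct_stack_sort_iter[of 1] by simp

lemma stack_sort_append:
  assumes "zs \<noteq> []" "\<forall>y\<in>set ys. y \<le> hd zs"
  shows "stack_sort (ys @ zs) = stack_sort ys @ stack_sort zs"
  using assms
proof (induction ys rule: stack_sort.induct)
  case (2 x rest)
  obtain z zs' where zs: "zs = z # zs'" using "2.prems" by (cases zs) auto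
  have xz: "\<not> z < x" using "2.prems" zs by auto
  have tw: "takeWhile (\<lambda>y. y < x) (rest @ zs) = takeWhile (\<lambda>y. y < x) rest"
    by (simp add: takeWhile_append zs xz) (metis takeWhile_eq_all_conv)
  have dw: "dropWhile (\<lambda>y. y < x) (rest @ zs) = dropWhile (\<lambda>y. y < x) rest @ zs"
    by (simp add: dropWhile_append zs xz)
  have "\<forall>y\<in>set (dropWhile (\<lambda>y. y < x) rest). y \<le> hd zs"
    using "2.prems"(2) by (auto dest!: set_dropWhileD)
  then show ?case using "2.IH" "2.prems"(1) by (simp add: tw dw)
qed simp

lemma stack_sort_Cons_min: "\<forall>y\<in>set ys. a < y \<Longrightarrow> stack_sort (a # ys) = a # stack_sort ys"
  by (cases ys) auto

lemma stack_sort_Cons_run_append: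
  assumes "\<forall>y\<in>set ys. y < x" "zs \<noteq> [] \<Longrightarrow> x \<le> hd zs"
  shows "stack_sort (x # ys @ zs) = rev ys @ x # stack_sort zs"
proof -
  have "takeWhile (\<lambda>y. y < x) (ys @ zs) = ys" "dropWhile (\<lambda>y. y < x) (ys @ zs) = zs"
    using assms by (cases zs; simp add: takeWhile_append dropWhile_append not_less)+
  then show ?thesis by simp
qed

lemma stack_sort_iter_Cons_min:
  "\<forall>y\<in>set ys. a < y \<Longrightarrow> (stack_sort ^^ k) (a # ys) = a # (stack_sort ^^ k) ys"
  by (induction k) (simp_all add: stack_sort_Cons_min del: stack_sort.simps)

lemma stack_sort_iter_snoc_max:
  "\<forall>y\<in>set zs. y < M \<Longrightarrow> (stack_sort ^^ k) (zs @ [M]) = (stack_sort ^^ k) zs @ [M]"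
proof (induction k)
  case (Suc k)
  then have "stack_sort ((stack_sort ^^ k) zs @ [M]) = stack_sort ((stack_sort ^^ k) zs) @ [M]"
    by (subst stack_sort_append) auto
  then show ?case using Suc by simp
qed simp

lemma le_last_stack_sort: "y \<in> set xs \<Longrightarrow> y \<le> last (stack_sort xs)"
proof (induction xs arbitrary: y rule: stack_sort.induct)
  case (2 x rest)
  let ?tw = "takeWhile (\<lambda>y. y < x) rest" and ?dw = "dropWhile (\<lambda>y. y < x) rest"
  have small: "z < x" if "z \<in> set ?tw" for z
    using that by (blast dest: set_takeWhileD)
  show ?case
  proof (cases "?dw = []")
    case True
    then have "set rest = set ?tw" by (metis append.right_neutral takeWhile_dropWhile_id)
    moreover have "last (stack_sort (x # rest)) = x" by (simp only: stack_sort.simps True) simp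
    ultimately show ?thesis using "2.prems" small by force
  next
    case False
    have ih: "z \<le> last (stack_sort ?dw)" if "z \<in> set ?dw" for z
      using "2.IH" that by blast
    have "x \<le> hd ?dw" using False hd_dropWhile by (metis not_le_imp_less)
    then have x_le: "x \<le> last (stack_sort ?dw)" using ih False by (meson hd_in_set order.trans)
    have "y \<in> set ?tw \<or> y = x \<or> y \<in> set ?dw"
      using "2.prems" by (metis set_ConsD set_append Un_iff takeWhile_dropWhile_id)
    then have "y \<le> last (stack_sort ?dw)" using ih x_le small by force
    moreover have "stack_sort ?dw \<noteq> []" using False by (metis length_0_conv length_stack_sort)
    ultimately show ?thesis by simp
  qed
qed simp

definition insert_at :: "nat \<Rightarrow> 'a \<Rightarrow> 'a list \<Rightarrow> 'a list" where
  "insert_at p a xs = take p xs @ a # drop p xs"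

lemma insert_at_0 [simp]: "insert_at 0 a xs = a # xs"
  by (simp add: insert_at_def)

lemma insert_at_length: "insert_at (length xs) a xs = xs @ [a]"
  by (simp add: insert_at_def)

lemma length_insert_at [simp]: "length (insert_at p a xs) = Suc (length xs)"
  by (simp add: insert_at_def)

lemma mset_insert_at [simp]: "mset (insert_at p a xs) = add_mset a (mset xs)"
  by (metis append_take_drop_id insert_at_def mset.simps(2) mset_append union_mset_add_mset_right)

lemma set_insert_at [simp]: "set (insert_at p a xs) = insert a (set xs)"
  by (metis mset_insert_at set_mset_mset set_mset_add_mset_insert)

lemma distinct_insert_at [simp]: "distinct (insert_at p a xs) \<longleftrightarrow> a \<notin> set xs \<and> distinct xs"
  by (metis distinct.simps(2) mset_eq_imp_distinct_iff mset.simps(2) mset_insert_at)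

lemma hd_insert_at_eq_iff: "a \<notin> set xs \<Longrightarrow> p \<le> length xs \<Longrightarrow> hd (insert_at p a xs) = a \<longleftrightarrow> p = 0"
  by (cases p; cases xs) (auto simp: insert_at_def)

lemma insert_at_append_left: "p \<le> length u \<Longrightarrow> insert_at p a (u @ v) = insert_at p a u @ v"
  by (simp add: insert_at_def)

lemma insert_at_append_right: "insert_at (length u + k) a (u @ v) = u @ insert_at k a v"
  by (simp add: insert_at_def)

lemma rev_insert_at: "p \<le> length xs \<Longrightarrow> rev (insert_at p a xs) = insert_at (length xs - p) a (rev xs)"
  by (simp add: insert_at_def rev_take rev_drop)

lemma insert_at_eq_Cons_iff:
  "a \<notin> set xs \<Longrightarrow> p \<le> length xs \<Longrightarrow> insert_at p a xs = a # ys \<longleftrightarrow> p = 0 \<and> ys = xs"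
  by (cases p; cases xs) (auto simp: insert_at_def)

lemma insert_at_inj:
  assumes "a \<notin> set xs" "a \<notin> set ys" "p \<le> length xs" "q \<le> length ys"
    and "insert_at p a xs = insert_at q a ys"
  shows "xs = ys \<and> p = q"
proof -
  have "removeAll a (insert_at p a xs) = xs" if "a \<notin> set xs" for p xs
    using that by (simp add: insert_at_def) (metis append_take_drop_id removeAll_append removeAll_id)
  moreover have "takeWhile (\<lambda>x. x \<noteq> a) (insert_at p a xs) = take p xs" if "a \<notin> set xs" for p xs
    using that unfolding insert_at_def by (subst takeWhile_append2) (auto dest: in_set_takeD)
  ultimately show ?thesis using assms by (metis length_take min.absorb2)
qed

lemma insert_at_decompose:
  assumes "a \<in> set xs" "distinct xs"
  obtains p ys where "p \<le> length ys" "a \<notin> set ys" "distinct ys" "set ys = set xs - {a}"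
    "xs = insert_at p a ys"
proof -
  obtain u v where xs: "xs = u @ a # v" using assms(1) by (metis in_set_conv_decomp)
  then have "xs = insert_at (length u) a (u @ v)" by (simp add: insert_at_def)
  then show ?thesis using that[of "length u" "u @ v"] assms(2) xs by auto
qed

text \<open>Where an entry \<open>a\<close> smaller than all of \<open>xs\<close>, inserted at position \<open>p\<close>, ends up after one pass:
inside the initial run below \<open>x\<close> (positions \<open>1..L\<close>) it is reversed together with the run,
beyond it it is carried into the recursive call.\<close>

function moved_pos :: "'a::linorder list \<Rightarrow> nat \<Rightarrow> nat" where
  "moved_pos [] p = 0"
| "moved_pos (x # rest) p =
     (let L = Suc (length (takeWhile (\<lambda>y. y < x) rest)) in
      if p = 0 then 0 else if p \<le> L then L - p
      else L + moved_pos (dropWhile (\<lambda>y. y < x) rest) (p - L))"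
  by pat_completeness auto
termination by (relation "measure (length \<circ> fst)") (auto simp: less_Suc_eq_le length_dropWhile_le)

lemma moved_pos_0 [simp]: "moved_pos xs 0 = 0"
  by (cases xs) auto

lemma stack_sort_insert_at_min:
  assumes "p \<le> length xs" "\<forall>y\<in>set xs. a < y"
  shows "stack_sort (insert_at p a xs) = insert_at (moved_pos xs p) a (stack_sort xs)"
  using assms
proof (induction xs arbitrary: p rule: stack_sort.induct)
  case (2 x rest)
  define tw where "tw = takeWhile (\<lambda>y. y < x) rest"
  define dw where "dw = dropWhile (\<lambda>y. y < x) rest"
  define L where "L = Suc (length tw)"
  have rest: "rest = tw @ dw" by (simp add: tw_def dw_def)
  have tw_less: "\<forall>y\<in>set tw. y < x" by (simp add: tw_def) (meson set_takeWhileD)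
  have hd_dw: "dw \<noteq> [] \<Longrightarrow> x \<le> hd dw" unfolding dw_def by (meson hd_dropWhile not_le)
  have sort: "stack_sort (x # rest) = rev tw @ x # stack_sort dw" by (simp add: tw_def dw_def)
  have pos: "moved_pos (x # rest) p = (if p = 0 then 0 else if p \<le> L then L - p else L + moved_pos dw (p - L))"
    by (simp add: L_def tw_def dw_def Let_def)
  consider "p = 0" | "0 < p" "p \<le> L" | "L < p" by linarith
  then show ?case
  proof cases
    case 1
    then show ?thesis using "2.prems" by (simp add: stack_sort_Cons_min del: stack_sort.simps)
  next
    case 2
    let ?tw' = "insert_at (p - 1) a tw"
    have "insert_at p a (x # rest) = x # ?tw' @ dw"
      using 2 rest by (cases p) (auto simp: insert_at_def L_def)
    moreover have "stack_sort (x # ?tw' @ dw) = rev ?tw' @ x # stack_sort dw"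
      using tw_less "2.prems"(2) hd_dw by (intro stack_sort_Cons_run_append) auto
    ultimately have "stack_sort (insert_at p a (x # rest)) = rev ?tw' @ x # stack_sort dw"
      by simp
    also have "\<dots> = insert_at (L - p) a (rev tw @ x # stack_sort dw)"
      using 2 by (simp add: rev_insert_at insert_at_append_left L_def)
    finally show ?thesis using 2 unfolding sort pos by simp
  next
    case 3
    have len: "p - L \<le> length dw" and "dw \<noteq> []"
      using 3 "2.prems"(1) rest by (auto simp: L_def)
    have "insert_at p a (x # rest) = x # tw @ insert_at (p - L) a dw"
      using insert_at_append_right[of "x # tw" "p - L" a dw] 3 rest by (simp add: L_def)
    moreover have "hd (insert_at (p - L) a dw) = hd dw"
      using 3 \<open>dw \<noteq> []\<close> by (cases "p - L"; cases dw) (auto simp: insert_at_def)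
    then have "stack_sort (x # tw @ insert_at (p - L) a dw) = rev tw @ x # stack_sort (insert_at (p - L) a dw)"
      using tw_less hd_dw \<open>dw \<noteq> []\<close> by (intro stack_sort_Cons_run_append) auto
    ultimately have "stack_sort (insert_at p a (x # rest)) = rev tw @ x # stack_sort (insert_at (p - L) a dw)"
      by simp
    also have "stack_sort (insert_at (p - L) a dw) = insert_at (moved_pos dw (p - L)) a (stack_sort dw)"
    proof -
      have "\<forall>y\<in>set dw. a < y" using "2.prems"(2) by (auto simp: dw_def dest: set_dropWhileD)
      then show ?thesis using "2.IH" len unfolding dw_def by blast
    qed
    also have "rev tw @ x # \<dots> = insert_at (L + moved_pos dw (p - L)) a (rev tw @ x # stack_sort dw)"
      using insert_at_append_right[of "rev tw @ [x]"] by (simp add: L_def)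
    finally show ?thesis using 3 unfolding sort pos by simp
  qed
qed simp

lemma moved_pos_Cons:
  obtains L dw where "length (x # rest) = L + length dw"
    "\<And>p. moved_pos (x # rest) p = (if p = 0 then 0 else if p \<le> L then L - p else L + moved_pos dw (p - L))"
    "dw = dropWhile (\<lambda>y. y < x) rest"
proof
  show "length (x # rest) = Suc (length (takeWhile (\<lambda>y. y < x) rest)) + length (dropWhile (\<lambda>y. y < x) rest)"
    by (metis add_Suc length_Cons length_append takeWhile_dropWhile_id)
qed (simp_all add: Let_def)

declare moved_pos.simps(2) [simp del]

lemma moved_pos_less: "0 < p \<Longrightarrow> p \<le> length xs \<Longrightarrow> moved_pos xs p < length xs"
proof (induction xs arbitrary: p rule: stack_sort.induct)
  case (2 x rest)
  obtain L dw where L: "length (x # rest) = L + length dw"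
    and pos: "\<And>p. moved_pos (x # rest) p = (if p = 0 then 0 else if p \<le> L then L - p else L + moved_pos dw (p - L))"
    and dw: "dw = dropWhile (\<lambda>y. y < x) rest"
    using moved_pos_Cons[of x rest] by blast
  show ?case
  proof (cases "p \<le> L")
    case False
    then have "moved_pos dw (p - L) < length dw" using "2.IH" "2.prems" L dw by simp
    then show ?thesis using pos L False "2.prems" by simp
  qed (use pos L "2.prems" in simp)
qed simp

lemma moved_pos_le: "p \<le> length xs \<Longrightarrow> moved_pos xs p \<le> length xs"
  using moved_pos_less[of p xs] by (cases "p = 0") auto

lemma inj_on_moved_pos: "inj_on (moved_pos xs) {1..length xs}"
proof (induction xs rule: stack_sort.induct)
  case (2 x rest)
  obtain L dw where L: "length (x # rest) = L + length dw"
    and pos: "\<And>p. moved_pos (x # rest) p = (if p = 0 then 0 else if p \<le> L then L - p else L + moved_pos dw (p - L))"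
    and dw: "dw = dropWhile (\<lambda>y. y < x) rest"
    using moved_pos_Cons[of x rest] by blast
  show ?case
  proof (rule inj_onI)
    fix p q assume p: "p \<in> {1..length (x # rest)}" and q: "q \<in> {1..length (x # rest)}"
      and eq: "moved_pos (x # rest) p = moved_pos (x # rest) q"
    consider "p \<le> L" "q \<le> L" | "(p \<le> L) \<noteq> (q \<le> L)" | "L < p" "L < q" by linarith
    then show "p = q"
    proof cases
      case 3
      then have "moved_pos dw (p - L) = moved_pos dw (q - L)" using eq pos p q by simp
      moreover have "p - L \<in> {1..length dw}" "q - L \<in> {1..length dw}" using p q 3 L by auto
      ultimately have "p - L = q - L" using inj_onD[OF "2.IH"[folded dw]] by blast
      then show ?thesis using 3 by simp
    qed (use eq pos p q in auto)
  qed
qed simp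

lemma bij_betw_moved_pos: "bij_betw (moved_pos xs) {1..length xs} {0..<length xs}"
proof -
  have "moved_pos xs ` {1..length xs} \<subseteq> {0..<length xs}" by (simp add: image_subset_iff moved_pos_less)
  moreover have "card (moved_pos xs ` {1..length xs}) = card {0..<length xs}"
    using card_image[OF inj_on_moved_pos] by simp
  ultimately show ?thesis using inj_on_moved_pos[of xs] by (simp add: bij_betw_def card_subset_eq)
qed

lemma stack_sort_iter_insert_at_min:
  assumes "p \<le> length xs" "\<forall>y\<in>set xs. a < y"
  obtains q where "q \<le> length xs" "(stack_sort ^^ k) (insert_at p a xs) = insert_at q a ((stack_sort ^^ k) xs)"
proof -
  have "\<exists>q \<le> length xs. (stack_sort ^^ k) (insert_at p a xs) = insert_at q a ((stack_sort ^^ k) xs)"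
  proof (induction k)
    case 0
    then show ?case using assms(1) by auto
  next
    case (Suc k)
    then obtain q where "q \<le> length xs" "(stack_sort ^^ k) (insert_at p a xs) = insert_at q a ((stack_sort ^^ k) xs)"
      by blast
    then show ?case
      using assms(2) stack_sort_insert_at_min[of q "(stack_sort ^^ k) xs" a] moved_pos_le[of q "(stack_sort ^^ k) xs"]
      by auto
  qed
  then show ?thesis using that by blast
qed

lemma stack_sort_snoc_max:
  assumes "distinct xs" "xs \<noteq> []"
  obtains ys M where "stack_sort xs = ys @ [M]" "\<forall>y\<in>set ys. y < M"
proof -
  have "stack_sort xs \<noteq> []" using assms(2) by (simp flip: length_greater_0_conv)
  then obtain ys M where sort: "stack_sort xs = ys @ [M]" by (cases "stack_sort xs" rule: rev_cases) auto
  have "y < M" if "y \<in> set ys" for y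
  proof -
    have "y \<in> set xs" "distinct (ys @ [M])"
      using that assms(1) by (simp_all flip: set_stack_sort[of xs] distinct_stack_sort[of xs] add: sort)
    then show ?thesis using le_last_stack_sort[of y xs] that by (auto simp: sort order.order_iff_strict)
  qed
  then show ?thesis using that sort by blast
qed

text \<open>Each pass puts the current maximum behind \<open>a\<close> and leaves \<open>a\<close> last among the remaining
entries, so \<open>a\<close> cannot reach the front before every other entry has been moved behind it.\<close>

lemma hd_stack_sort_iter_snoc_min:
  assumes "distinct xs" "\<forall>y\<in>set xs. a < y" "r < length xs"
  shows "hd ((stack_sort ^^ r) (stack_sort xs @ [a])) \<noteq> a"
  using assms
proof (induction r arbitrary: xs)
  case 0
  then have "stack_sort xs \<noteq> []" by (metis length_0_conv length_stack_sort less_zeroE)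
  then show ?case using "0.prems"(2) hd_in_set[of "stack_sort xs"] by fastforce
next
  case (Suc r xs)
  have "xs \<noteq> []" using Suc.prems(3) by auto
  then obtain ys M where sort: "stack_sort xs = ys @ [M]" and less_M: "\<forall>y\<in>set ys. y < M"
    using stack_sort_snoc_max Suc.prems(1) by blast
  have set_xs: "set xs = insert M (set ys)" and "length xs = Suc (length ys)"
    by (simp_all flip: set_stack_sort[of xs] length_stack_sort[of xs] add: sort)
  moreover have "distinct (ys @ [M])" using Suc.prems(1) by (simp flip: sort)
  ultimately have ys: "distinct ys" "\<forall>y\<in>set ys. a < y" "r < length ys" and "a < M"
    using Suc.prems(2,3) by auto
  have "stack_sort (ys @ [M, a]) = stack_sort ys @ stack_sort [M, a]"
    using less_M by (intro stack_sort_append) auto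
  then have "stack_sort (stack_sort xs @ [a]) = (stack_sort ys @ [a]) @ [M]"
    using \<open>a < M\<close> by (simp add: sort)
  then have "(stack_sort ^^ Suc r) (stack_sort xs @ [a]) = (stack_sort ^^ r) (stack_sort ys @ [a]) @ [M]"
    using stack_sort_iter_snoc_max[of "stack_sort ys @ [a]" M r] less_M \<open>a < M\<close>
    by (simp add: funpow_Suc_right del: funpow.simps)
  moreover have "(stack_sort ^^ r) (stack_sort ys @ [a]) \<noteq> []"
    by (metis length_0_conv length_stack_sort_iter length_append_singleton nat.distinct(1))
  ultimately show ?case using Suc.IH[OF ys] by simp
qed

definition head_positions :: "nat \<Rightarrow> 'a::linorder \<Rightarrow> 'a list \<Rightarrow> nat set" where
  "head_positions r a xs = {p. p \<le> length xs \<and> hd ((stack_sort ^^ r) (insert_at p a xs)) = a}"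

lemma head_positions_subset: "head_positions r a xs \<subseteq> {0..length xs}"
  by (auto simp: head_positions_def)

lemma head_positions_0:
  assumes "\<forall>y\<in>set xs. a < y"
  shows "head_positions 0 a xs = {0}"
proof -
  have "a \<notin> set xs" using assms by blast
  then show ?thesis by (auto simp: head_positions_def hd_insert_at_eq_iff)
qed

lemma head_positions_Suc:
  assumes "\<forall>y\<in>set xs. a < y"
  shows "head_positions (Suc r) a xs =
    insert 0 {p \<in> {1..length xs}. moved_pos xs p \<in> head_positions r a (stack_sort xs)}"
proof -
  have step: "(stack_sort ^^ Suc r) (insert_at p a xs) =
      (stack_sort ^^ r) (insert_at (moved_pos xs p) a (stack_sort xs))" if "p \<le> length xs" for p
    using stack_sort_insert_at_min[OF that assms] by (simp add: funpow_Suc_right del: funpow.simps)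
  have zero: "0 \<in> head_positions (Suc r) a xs"
    using stack_sort_iter_Cons_min[OF assms, of "Suc r"] by (simp add: head_positions_def del: funpow.simps)
  show ?thesis
  proof (rule set_eqI)
    fix p
    have "p \<in> head_positions (Suc r) a xs \<longleftrightarrow>
        p \<le> length xs \<and> moved_pos xs p \<in> head_positions r a (stack_sort xs)"
      using step[of p] moved_pos_le[of p xs] unfolding head_positions_def by auto
    then show "p \<in> head_positions (Suc r) a xs \<longleftrightarrow>
        p \<in> insert 0 {p \<in> {1..length xs}. moved_pos xs p \<in> head_positions r a (stack_sort xs)}"
      using zero by (cases "p = 0") auto
  qed
qed

lemma card_head_positions:
  assumes "distinct xs" "\<forall>y\<in>set xs. a < y"
  shows "card (head_positions r a xs) = min (Suc r) (Suc (length xs))"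
  using assms
proof (induction r arbitrary: xs)
  case 0
  then show ?case by (simp add: head_positions_0)
next
  case (Suc r xs)
  define m where "m = length xs"
  define B where "B = head_positions r a (stack_sort xs)"
  have card_B: "card B = min (Suc r) (Suc m)"
    using Suc.IH[of "stack_sort xs"] Suc.prems by (simp add: B_def m_def)
  have "bij_betw (moved_pos xs) {p \<in> {1..m}. moved_pos xs p \<in> B} {q \<in> {0..<m}. q \<in> B}"
    using bij_betw_moved_pos[of xs] unfolding m_def by (rule bij_betw_Collect) simp
  then have card_Suc: "card (head_positions (Suc r) a xs) = Suc (card {q \<in> {0..<m}. q \<in> B})"
    using head_positions_Suc[OF Suc.prems(2), of r] by (simp add: B_def m_def bij_betw_same_card)
  show ?case
  proof (cases "m \<le> r")
    case True
    then have "B = {0..m}"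
      using card_B head_positions_subset[of r a "stack_sort xs"] by (simp add: B_def m_def card_subset_eq)
    then have "{q \<in> {0..<m}. q \<in> B} = {0..<m}" by auto
    then show ?thesis using card_Suc True by (simp add: m_def)
  next
    case False
    then have "m \<notin> B"
      using hd_stack_sort_iter_snoc_min[OF Suc.prems] insert_at_length[of "stack_sort xs" a]
      by (simp add: B_def head_positions_def m_def)
    moreover have "B \<subseteq> {0..m}"
      using head_positions_subset[of r a "stack_sort xs"] by (simp add: B_def m_def)
    ultimately have "{q \<in> {0..<m}. q \<in> B} = B" by (auto simp: order.order_iff_strict)
    then show ?thesis using card_Suc card_B False by (simp add: m_def)
  qed
qed

lemma bij_betw_insert_at_permutations:
  assumes "a \<notin> S"
  shows "bij_betw (\<lambda>(\<sigma>, p). insert_at p a \<sigma>) (SIGMA \<sigma>:permutations_of_set S. {0..length \<sigma>})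
    (permutations_of_set (insert a S))"
proof (rule bij_betwI')
  fix x y assume "x \<in> (SIGMA \<sigma>:permutations_of_set S. {0..length \<sigma>})" "y \<in> (SIGMA \<sigma>:permutations_of_set S. {0..length \<sigma>})"
  then show "((case x of (\<sigma>, p) \<Rightarrow> insert_at p a \<sigma>) = (case y of (\<sigma>, p) \<Rightarrow> insert_at p a \<sigma>)) = (x = y)"
    using assms insert_at_inj[of a] by (auto simp: permutations_of_set_def)
next
  fix x assume "x \<in> (SIGMA \<sigma>:permutations_of_set S. {0..length \<sigma>})"
  then show "(case x of (\<sigma>, p) \<Rightarrow> insert_at p a \<sigma>) \<in> permutations_of_set (insert a S)"
    using assms by (auto simp: permutations_of_set_def)
next
  fix \<pi> assume "\<pi> \<in> permutations_of_set (insert a S)"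
  then have "a \<in> set \<pi>" "distinct \<pi>" "set \<pi> = insert a S" by (auto simp: permutations_of_set_def)
  moreover obtain p \<sigma> where "p \<le> length \<sigma>" "a \<notin> set \<sigma>" "distinct \<sigma>" "set \<sigma> = set \<pi> - {a}" "\<pi> = insert_at p a \<sigma>"
    using \<open>a \<in> set \<pi>\<close> \<open>distinct \<pi>\<close> by (rule insert_at_decompose)
  ultimately have "set \<sigma> = S" using assms by blast
  then have "\<sigma> \<in> permutations_of_set S" using \<open>distinct \<sigma>\<close> by (rule permutations_of_setI)
  then show "\<exists>x\<in>SIGMA \<sigma>:permutations_of_set S. {0..length \<sigma>}. \<pi> = (case x of (\<sigma>, p) \<Rightarrow> insert_at p a \<sigma>)"
    using \<open>p \<le> length \<sigma>\<close> \<open>\<pi> = insert_at p a \<sigma>\<close> by force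
qed

lemma stack_sort_iter_insert_at_min_eq_Cons_iff:
  assumes "\<forall>y\<in>set xs. a < y" "p \<le> length xs"
  shows "(stack_sort ^^ t) (insert_at p a xs) = a # ys \<longleftrightarrow>
    (stack_sort ^^ t) xs = ys \<and> p \<in> head_positions t a xs"
proof -
  obtain q where q: "q \<le> length xs" and eq: "(stack_sort ^^ t) (insert_at p a xs) = insert_at q a ((stack_sort ^^ t) xs)"
    using stack_sort_iter_insert_at_min[OF assms(2,1)] .
  have "a \<notin> set ((stack_sort ^^ t) xs)" using assms(1) by auto
  then show ?thesis
    using q assms(2) by (auto simp: head_positions_def eq insert_at_eq_Cons_iff hd_insert_at_eq_iff)
qed

lemma card_stack_sortable_insert_min:
  assumes "finite S" "\<forall>y\<in>S. a < y"
  shows "card {\<pi> \<in> permutations_of_set (insert a S). (stack_sort ^^ t) \<pi> = sorted_list_of_set (insert a S)} =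
    card {\<sigma> \<in> permutations_of_set S. (stack_sort ^^ t) \<sigma> = sorted_list_of_set S} * min (Suc t) (Suc (card S))"
proof -
  let ?F = "\<lambda>(\<sigma>, p). insert_at p a \<sigma>"
  let ?P = "\<lambda>\<pi>. (stack_sort ^^ t) \<pi> = sorted_list_of_set (insert a S)"
  define sortable where "sortable = {\<sigma> \<in> permutations_of_set S. (stack_sort ^^ t) \<sigma> = sorted_list_of_set S}"
  have "a \<notin> S" using assms(2) by blast
  have sorted: "sorted_list_of_set (insert a S) = a # sorted_list_of_set S"
    using assms \<open>a \<notin> S\<close> by (simp add: sorted_list_of_set_insert_remove insort_is_Cons less_imp_le)
  have "bij_betw ?F {x \<in> (SIGMA \<sigma>:permutations_of_set S. {0..length \<sigma>}). ?P (?F x)}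
      {\<pi> \<in> permutations_of_set (insert a S). ?P \<pi>}"
    using bij_betw_insert_at_permutations[OF \<open>a \<notin> S\<close>] by (rule bij_betw_Collect) simp
  moreover have "{x \<in> (SIGMA \<sigma>:permutations_of_set S. {0..length \<sigma>}). ?P (?F x)} =
      (SIGMA \<sigma>:sortable. head_positions t a \<sigma>)"
  proof (rule set_eqI, clarify)
    fix \<sigma> p
    show "(\<sigma>, p) \<in> {x \<in> (SIGMA \<sigma>:permutations_of_set S. {0..length \<sigma>}). ?P (?F x)} \<longleftrightarrow>
        (\<sigma>, p) \<in> (SIGMA \<sigma>:sortable. head_positions t a \<sigma>)"
    proof (cases "\<sigma> \<in> permutations_of_set S \<and> p \<le> length \<sigma>")
      case True
      then have "\<forall>y\<in>set \<sigma>. a < y" using assms(2) by (auto simp: permutations_of_set_def)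
      then show ?thesis
        using True stack_sort_iter_insert_at_min_eq_Cons_iff[of \<sigma> a p t] by (simp add: sortable_def sorted)
    next
      case False
      then show ?thesis using head_positions_subset[of t a \<sigma>] by (auto simp: sortable_def)
    qed
  qed
  moreover have "card (head_positions t a \<sigma>) = min (Suc t) (Suc (card S))" if "\<sigma> \<in> sortable" for \<sigma>
    using that card_head_positions[of \<sigma> a t] assms(2) length_finite_permutations_of_set[of \<sigma> S]
    by (auto simp: sortable_def permutations_of_set_def)
  ultimately show ?thesis
    by (simp add: bij_betw_same_card[symmetric] sortable_def head_positions_def)
qed

lemma sortable_count_Suc:
  "(if Suc k \<le> t then fact (Suc k) else fact t * (t + 1) ^ (Suc k - t)) =
    (if k \<le> t then fact k else fact t * (t + 1) ^ (k - t)) * min (Suc t) (Suc k :: nat)"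
proof (cases "k < t")
  case False
  then have "Suc k - t = Suc (k - t)" by simp
  then show ?thesis using False by (simp add: min_def algebra_simps)
qed (simp add: min_def)

theorem card_stack_sortable_permutations:
  fixes S :: "'a::linorder set"
  assumes "finite S"
  shows "card {\<pi> \<in> permutations_of_set S. (stack_sort ^^ t) \<pi> = sorted_list_of_set S} =
    (if card S \<le> t then fact (card S) else fact t * (t + 1) ^ (card S - t))"
  using assms
proof (induction S rule: finite_linorder_min_induct)
  case empty
  have "(stack_sort ^^ t) [] = []" by (induction t) auto
  then have sortable: "{\<pi> \<in> permutations_of_set {}. (stack_sort ^^ t) \<pi> = sorted_list_of_set {}} = {[]}"
    by auto
  show ?case unfolding sortable by simp
next
  case (insert a S)
  have "a \<notin> S" using insert.hyps(2) by blast
  have "card {\<pi> \<in> permutations_of_set (insert a S). (stack_sort ^^ t) \<pi> = sorted_list_of_set (insert a S)} =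
      card {\<sigma> \<in> permutations_of_set S. (stack_sort ^^ t) \<sigma> = sorted_list_of_set S} * min (Suc t) (Suc (card S))"
    using insert.hyps(1,2) by (rule card_stack_sortable_insert_min)
  also have "\<dots> = (if Suc (card S) \<le> t then fact (Suc (card S)) else fact t * (t + 1) ^ (Suc (card S) - t))"
    unfolding insert.IH by (rule sortable_count_Suc[symmetric])
  finally show ?case unfolding card_insert_disjoint[OF insert.hyps(1) \<open>a \<notin> S\<close>] .
qed

theorem theorem3p4:
  fixes n t :: nat
  assumes "n \<ge> 1"
  shows "card {\<pi> \<in> permutations_of_set {1..n}. t_stack_sortable t \<pi>} =
           (if n \<le> t then fact n else fact t * (t + 1) ^ (n - t))"
proof -
  have "t_stack_sortable t \<pi> \<longleftrightarrow> (stack_sort ^^ t) \<pi> = sorted_list_of_set {1..n}"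
    if "\<pi> \<in> permutations_of_set {1..n}" for \<pi>
    using that length_finite_permutations_of_set[of \<pi> "{1..n}"]
    by (simp add: t_stack_sortable_def s12_eq_stack_sort atLeastLessThanSuc_atLeastAtMost[symmetric])
  then show ?thesis using card_stack_sortable_permutations[of "{1..n}" t] by (simp cong: conj_cong)
qed

end
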